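(* Let $\hat Q^\pi\in\mathcal H$ satisfy $\hat C_{\omega_0,\omega_0}\hat Q^\pi-\big[\hat C_{\omega_0,\omega_0}r+\gamma\hat C_{\omega_0,\omega_1}\hat Q^\pi\big]+\lambda\hat Q^\pi=0$ (equivalently, $\hat Q^\pi$ is the kernel TD estimator). Then $\hat Q^\pi\in\hat{\mathcal H}:=\mathrm{span}\{K(\omega_0^{(i)},\cdot):i=1,\dots,n\}$.
   Context: $\mathcal S\subset\mathbb R^{d_s}$, $\mathcal A\subset\mathbb R^{d_a}$ compact convex; $K$ a symmetric positive definite kernel on $\mathcal S\times\mathcal A$ with bounded diagonal and RKHS $\mathcal H$; $r\in\mathcal H$; $\gamma\in[0,1]$, $\lambda>0$. Sample points $\omega_0^{(i)},\omega_1^{(i)}\in\mathcal S\times\mathcal A$, $i=1,\dots,n$. Empirical operators: $\hat C_{\omega_0,\omega_0}g=\frac1n\sum_{i=1}^ng(\omega_0^{(i)})K(\omega_0^{(i)},\cdot)$ and $\hat C_{\omega_0,\omega_1}g=\frac1n\sum_{i=1}^ng(\omega_1^{(i)})K(\omega_0^{(i)},\cdot)$ for $g\in\mathcal H$. *)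

theory Defs
  imports "HOL-Analysis.Analysis"
begin

text \<open>The RKHS H of a kernel K on X is represented by a real Hilbert space
  type 'h together with the canonical feature map Phi, where Phi x plays the role of
  K(x,.) in H.  The reproducing property is g(x) = inner g (Phi x), so
  K(x,y) = inner (Phi x) (Phi y), and H is generated by the K(x,.), i.e. the span of
  Phi ` X is dense.\<close>

definition rkhs_model :: "('x \<Rightarrow> 'x \<Rightarrow> real) \<Rightarrow> 'x set \<Rightarrow> ('x \<Rightarrow> 'h::{real_inner,complete_space}) \<Rightarrow> bool" where
  "rkhs_model K X Phi \<longleftrightarrow>
     (\<forall>x\<in>X. \<forall>y\<in>X. K x y = inner (Phi x) (Phi y)) \<and>
     closure (span (Phi ` X)) = UNIV"

definition rkhs_eval :: "('x \<Rightarrow> 'h::real_inner) \<Rightarrow> 'h \<Rightarrow> 'x \<Rightarrow> real" where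
  "rkhs_eval Phi g x = inner g (Phi x)"

definition C_hat_00 :: "('x \<Rightarrow> 'h::real_inner) \<Rightarrow> (nat \<Rightarrow> 'x) \<Rightarrow> nat \<Rightarrow> 'h \<Rightarrow> 'h" where
  "C_hat_00 Phi w0 n g = (1 / real n) *\<^sub>R (\<Sum>i=1..n. rkhs_eval Phi g (w0 i) *\<^sub>R Phi (w0 i))"

definition C_hat_01 :: "('x \<Rightarrow> 'h::real_inner) \<Rightarrow> (nat \<Rightarrow> 'x) \<Rightarrow> (nat \<Rightarrow> 'x) \<Rightarrow> nat \<Rightarrow> 'h \<Rightarrow> 'h" where
  "C_hat_01 Phi w0 w1 n g = (1 / real n) *\<^sub>R (\<Sum>i=1..n. rkhs_eval Phi g (w1 i) *\<^sub>R Phi (w0 i))"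

end

theory Submission
  imports Defs
begin

text \<open>Both empirical operators take all their values in the span of the features
  \<open>Phi (w0 i)\<close> at the samples. Solving the TD equation for \<open>lam *\<^sub>R Q\<close> writes it as a
  combination of such values, and \<open>lam \<noteq> 0\<close> can be divided out.\<close>

lemma C_hat_00_in_span: "C_hat_00 Phi w0 n g \<in> span ((\<lambda>i. Phi (w0 i)) ` {1..n})"
  unfolding C_hat_00_def by (intro span_scale span_sum span_base) auto

lemma C_hat_01_in_span: "C_hat_01 Phi w0 w1 n g \<in> span ((\<lambda>i. Phi (w0 i)) ` {1..n})"
  unfolding C_hat_01_def by (intro span_scale span_sum span_base) auto

lemma span_scaleR_iff:
  fixes x :: "'v::real_vector"
  assumes "c \<noteq> 0"
  shows "c *\<^sub>R x \<in> span S \<longleftrightarrow> x \<in> span S"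
proof
  assume "c *\<^sub>R x \<in> span S"
  then have "inverse c *\<^sub>R (c *\<^sub>R x) \<in> span S" by (rule span_scale)
  then show "x \<in> span S" using assms by simp
qed (rule span_scale)

theorem lemma4:
  fixes S :: "'s::euclidean_space set" and A :: "'a::euclidean_space set"
    and K :: "'s \<times> 'a \<Rightarrow> 's \<times> 'a \<Rightarrow> real"
    and Phi :: "'s \<times> 'a \<Rightarrow> 'h::{real_inner,complete_space}"
    and r Q :: 'h
    and \<gamma> lam :: real and n :: nat
    and w0 w1 :: "nat \<Rightarrow> 's \<times> 'a"
  assumes "compact S" "convex S" "compact A" "convex A"
    and rkhs: "rkhs_model K (S \<times> A) Phi"
    and sym: "\<forall>x\<in>S \<times> A. \<forall>y\<in>S \<times> A. K x y = K y x"
    and pd: "\<forall>m::nat. \<forall>c::nat \<Rightarrow> real. \<forall>x::nat \<Rightarrow> 's \<times> 'a.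
               (\<forall>i<m. x i \<in> S \<times> A) \<longrightarrow> (\<Sum>i<m. \<Sum>j<m. c i * c j * K (x i) (x j)) \<ge> 0"
    and bdd: "\<exists>B. \<forall>x\<in>S \<times> A. K x x \<le> B"
    and "0 \<le> \<gamma>" "\<gamma> \<le> 1" "lam > 0" "n \<ge> 1"
    and samples: "\<forall>i\<in>{1..n}. w0 i \<in> S \<times> A \<and> w1 i \<in> S \<times> A"
    and TD: "C_hat_00 Phi w0 n Q - (C_hat_00 Phi w0 n r + \<gamma> *\<^sub>R C_hat_01 Phi w0 w1 n Q)
               + lam *\<^sub>R Q = 0"
  shows "Q \<in> span ((\<lambda>i. Phi (w0 i)) ` {1..n})"
proof -
  have "lam *\<^sub>R Q = C_hat_00 Phi w0 n r + \<gamma> *\<^sub>R C_hat_01 Phi w0 w1 n Q - C_hat_00 Phi w0 n Q"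
    using TD by (simp add: algebra_simps eq_neg_iff_add_eq_0)
  also have "\<dots> \<in> span ((\<lambda>i. Phi (w0 i)) ` {1..n})"
    by (intro span_diff span_add span_scale C_hat_00_in_span C_hat_01_in_span)
  finally show ?thesis
    using \<open>lam > 0\<close> by (simp add: span_scaleR_iff)
qed

end
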